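(* Let $A\in\mathrm{Mat}(2,\mathbb{Z})$ have finite order $k=\mathrm{ord}(A)$. Then $k\in\mathrm{Per}(f_A)$. Consequently, if the eigenvalues of $A$ are non-real complex roots of unity, then $\mathrm{Per}(f_A)=\mathrm{MPer}(f_A)\cup\{\mathrm{ord}(A)\}$.
   Context: $\mathbb{T}^2=\mathbb{R}^2/\mathbb{Z}^2$. For $A\in\mathrm{Mat}(2,\mathbb{Z})$ (the $2\times 2$ integer matrices), $f_A:\mathbb{T}^2\to\mathbb{T}^2$ is the toral endomorphism $x+\mathbb{Z}^2\mapsto Ax+\mathbb{Z}^2$. $A$ has finite order $k=\mathrm{ord}(A)$ if $k$ is the least positive integer with $A^k=\mathrm{id}$. For a map $f:\mathbb{T}^2\to\mathbb{T}^2$, $\mathrm{Per}(f)$ is the set of $n\in\mathbb{N}=\{1,2,\dots\}$ such that $f$ has a periodic orbit of length (least period) exactly $n$. The minimal period set is $\mathrm{MPer}(f_A)=\bigcap_{g\simeq f_A}\mathrm{Per}(g)$, the intersection over all continuous maps $g:\mathbb{T}^2\to\mathbb{T}^2$ homotopic to $f_A$. *)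

theory Defs
  imports "HOL-Analysis.Analysis"
begin

text \<open>Integer 2x2 matrices are modelled as int^2^2; the torus R^2/Z^2 is modelled
 (via the standard homeomorphism (x,y) + Z^2 \<mapsto> (e^(2 pi i x), e^(2 pi i y)))
 as the product of two unit circles in C x C.\<close>

definition torus :: "(complex \<times> complex) set" where
  "torus = {(z, w). norm z = 1 \<and> norm w = 1}"

definition mat_pow :: "int^2^2 \<Rightarrow> nat \<Rightarrow> int^2^2" where
  "mat_pow A k = (((**) A) ^^ k) (mat 1)"

definition has_finite_order :: "int^2^2 \<Rightarrow> bool" where
  "has_finite_order A \<longleftrightarrow> (\<exists>k>0. mat_pow A k = mat 1)"

definition mat_ord :: "int^2^2 \<Rightarrow> nat" where
  "mat_ord A = (LEAST k. k > 0 \<and> mat_pow A k = mat 1)"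

text \<open>The toral endomorphism f_A: x + Z^2 \<mapsto> A x + Z^2, in circle coordinates
 (z,w) = (e^(2 pi i x1), e^(2 pi i x2)).\<close>
definition toral_map :: "int^2^2 \<Rightarrow> complex \<times> complex \<Rightarrow> complex \<times> complex" where
  "toral_map A = (\<lambda>(z, w). (z powi (A$1$1) * w powi (A$1$2),
                             z powi (A$2$1) * w powi (A$2$2)))"

definition Per :: "'a set \<Rightarrow> ('a \<Rightarrow> 'a) \<Rightarrow> nat set" where
  "Per S g = {n. n \<ge> 1 \<and> (\<exists>x\<in>S. (g ^^ n) x = x \<and> (\<forall>m. 0 < m \<and> m < n \<longrightarrow> (g ^^ m) x \<noteq> x))}"

definition MPer :: "int^2^2 \<Rightarrow> nat set" where
  "MPer A = (\<Inter>{Per torus g | g. homotopic_with_canon (\<lambda>_. True) torus torus (toral_map A) g})"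

definition is_complex_eigenvalue :: "int^2^2 \<Rightarrow> complex \<Rightarrow> bool" where
  "is_complex_eigenvalue A \<mu> \<longleftrightarrow>
     (\<exists>v::complex^2. v \<noteq> 0 \<and> (map_matrix of_int A) *v v = \<mu> *s v)"

end

theory Submission
  imports Defs
begin

text \<open>Lift to the universal cover \<open>R\<^sup>2 \<rightarrow> T\<^sup>2\<close>, where \<open>f\<^sub>A\<close> becomes \<open>x \<mapsto> A x\<close> and the deck
  group is \<open>Z\<^sup>2\<close>.

  For the first claim, let \<open>N\<close> exceed every entry of \<open>A\<^sup>m - I\<close>, \<open>0 < m < ord A\<close>. These
  entries are base-\<open>N\<close> digits of the coordinates of \<open>(A\<^sup>m - I) (1/N, 1/N\<^sup>2)\<close>, so \<open>A\<^sup>m\<close>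
  moves the point \<open>(1/N, 1/N\<^sup>2)\<close> off its \<open>Z\<^sup>2\<close>-class unless \<open>A\<^sup>m = I\<close>; its image on the
  torus has least period \<open>ord A\<close>.

  For the second claim, non-real eigenvalues and finite order force \<open>det A = 1\<close> and
  \<open>tr A \<in> {-1, 0, 1}\<close>, whence \<open>A\<^sup>3\<close>, \<open>A\<^sup>4\<close> or \<open>A\<^sup>6\<close> is \<open>I\<close>. Every period of \<open>f\<^sub>A\<close>
  divides \<open>ord A\<close>, so it suffices to show that each proper divisor \<open>d\<close> of this exponent lies
  in \<open>MPer A\<close>. A map \<open>g\<close> homotopic to \<open>f\<^sub>A\<close> lifts to \<open>G\<close> with \<open>G (x + m) = G x + A m\<close>, so
  \<open>G\<^sup>d - A\<^sup>d\<close> is bounded, and when \<open>A\<^sup>d - I\<close> is invertible Brouwer's theorem yields \<open>x\<close>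
  with \<open>G\<^sup>d x = x + v\<close> for any prescribed \<open>v\<close>. For \<open>d = 1\<close> this is a fixed point of \<open>g\<close>. For
  prime \<open>d\<close>, taking \<open>v \<in> Z\<^sup>2\<close> outside the image of \<open>I + A + \<dots> + A\<^sup>d\<^sup>-\<^sup>1\<close> (possible when
  its determinant has absolute value at least 2) prevents the image of \<open>x\<close> from being
  fixed by \<open>g\<close>, so its least period is \<open>d\<close>.\<close>

definition cover :: "real \<times> real \<Rightarrow> complex \<times> complex" where
  "cover x = (cis (2 * pi * fst x), cis (2 * pi * snd x))"

definition of_int_pair :: "int \<times> int \<Rightarrow> real \<times> real" where
  "of_int_pair m = (of_int (fst m), of_int (snd m))"

definition mat_act :: "int^2^2 \<Rightarrow> 'a::comm_ring_1 \<times> 'a \<Rightarrow> 'a \<times> 'a" where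
  "mat_act A x = (of_int (A$1$1) * fst x + of_int (A$1$2) * snd x,
                  of_int (A$2$1) * fst x + of_int (A$2$2) * snd x)"

lemma mat_pow_Suc: "mat_pow A (Suc n) = A ** mat_pow A n"
  by (simp add: mat_pow_def)

lemma mat_pow_0 [simp]: "mat_pow A 0 = mat 1"
  by (simp add: mat_pow_def)

lemma trace_2: "trace (A::'a::comm_semiring_1^2^2) = A$1$1 + A$2$2"
  by (simp add: trace_def sum_2)

lemma mat_act_one [simp]: "mat_act (mat 1) x = x"
  by (simp add: mat_act_def mat_def)

lemma mat_act_mult: "mat_act (A ** B) x = mat_act A (mat_act B x)"
  by (simp add: mat_act_def matrix_matrix_mult_def sum_2 algebra_simps)

lemma mat_act_add: "mat_act A (x + y) = mat_act A x + mat_act A y"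
  by (simp add: mat_act_def algebra_simps)

lemma mat_act_matrix_add: "mat_act (A + B) x = mat_act A x + mat_act B x"
  by (simp add: mat_act_def algebra_simps)

lemma mat_act_matrix_diff: "mat_act (A - B) x = mat_act A x - mat_act B x"
  by (simp add: mat_act_def algebra_simps)

lemma mat_act_of_int_pair: "mat_act A (of_int_pair m) = of_int_pair (mat_act A m)"
  by (simp add: mat_act_def of_int_pair_def)

lemma of_int_pair_add: "of_int_pair (m + n) = of_int_pair m + of_int_pair n"
  by (simp add: of_int_pair_def)

lemma of_int_pair_eq_iff [simp]: "of_int_pair m = of_int_pair n \<longleftrightarrow> m = n"
  by (simp add: of_int_pair_def prod_eq_iff)

lemma cis_2pi_eq_iff: "cis (2 * pi * a) = cis (2 * pi * b) \<longleftrightarrow> a - b \<in> \<int>"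
proof -
  have "cis (2 * pi * a) = cis (2 * pi * b) \<longleftrightarrow> cis (2 * pi * (a - b)) = 1"
    by (simp add: right_diff_distrib divide_eq_1_iff flip: cis_divide)
  also have "\<dots> \<longleftrightarrow> (\<exists>n::int. 2 * pi * (a - b) = of_int n * (2 * pi))"
    unfolding cis_conv_exp exp_eq_1 by (auto simp: algebra_simps)
  also have "\<dots> \<longleftrightarrow> a - b \<in> \<int>"
    by (auto simp: Ints_def)
  finally show ?thesis .
qed

lemma cover_eq_iff: "cover x = cover y \<longleftrightarrow> (\<exists>m. x = y + of_int_pair m)"
proof
  assume "cover x = cover y"
  then have "fst x - fst y \<in> \<int>" "snd x - snd y \<in> \<int>"
    by (auto simp: cover_def cis_2pi_eq_iff)
  then obtain a b where "fst x - fst y = of_int a" "snd x - snd y = of_int b"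
    by (metis Ints_cases)
  then have "x = y + of_int_pair (a, b)"
    by (simp add: of_int_pair_def prod_eq_iff)
  then show "\<exists>m. x = y + of_int_pair m" ..
qed (auto simp: cover_def of_int_pair_def cis_2pi_eq_iff)

lemma cover_add_of_int_pair [simp]: "cover (x + of_int_pair m) = cover x"
  using cover_eq_iff by blast

lemma torus_eq_range_cover: "torus = range cover"
proof
  show "range cover \<subseteq> torus"
    by (auto simp: cover_def torus_def)
  have "z = cis (2 * pi * (Arg z / (2 * pi)))" if "norm z = 1" for z
  proof -
    have "z \<noteq> 0"
      using that by auto
    then show ?thesis
      using that by (simp add: cis_Arg sgn_div_norm)
  qed
  then have "(z, w) = cover (Arg z / (2 * pi), Arg w / (2 * pi))"
    if "norm z = 1" "norm w = 1" for z w
    using that by (simp add: cover_def)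
  then show "torus \<subseteq> range cover"
    by (auto simp: torus_def)
qed

lemma cover_in_torus [simp]: "cover x \<in> torus"
  by (simp add: torus_eq_range_cover)

lemma continuous_on_cover: "continuous_on S cover"
  unfolding cover_def by (intro continuous_intros)

lemma toral_map_cover: "toral_map A (cover x) = cover (mat_act A x)"
  by (simp add: toral_map_def cover_def mat_act_def cis_power_int cis_mult algebra_simps)

lemma funpow_toral_map_cover:
  "(toral_map A ^^ n) (cover x) = cover (mat_act (mat_pow A n) x)"
  by (induction n) (simp_all add: mat_pow_Suc mat_act_mult toral_map_cover)

lemma funpow_gcd_fixed:
  assumes "(f ^^ m) x = x" "(f ^^ n) x = x"
  shows "(f ^^ gcd m n) x = x"
  using assms
proof (induction m n rule: gcd_nat_induct)
  case (step m n)
  then show ?case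
    using funpow_mod_eq[where f = f, OF step.prems(2), of m] by (simp add: gcd_non_0_nat)
qed simp

lemma least_period_dvd:
  assumes "(f ^^ n) x = x" "0 < n" "\<forall>m. 0 < m \<and> m < n \<longrightarrow> (f ^^ m) x \<noteq> x"
    and "(f ^^ k) x = x"
  shows "n dvd k"
proof -
  have "0 < gcd n k" "gcd n k \<le> n"
    using \<open>0 < n\<close> by (simp_all add: dvd_imp_le)
  then have "gcd n k = n"
    using assms funpow_gcd_fixed[OF assms(1,4)] by (meson le_neq_implies_less)
  then show ?thesis
    by (metis gcd_dvd2)
qed

lemma prime_in_Per:
  assumes "x \<in> S" "prime p" "(f ^^ p) x = x" "f x \<noteq> x"
  shows "p \<in> Per S f"
proof -
  have "(f ^^ m) x \<noteq> x" if "0 < m" "m < p" for m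
  proof
    assume "(f ^^ m) x = x"
    moreover have "gcd m p = 1"
      using that \<open>prime p\<close> by (metis gcd.commute nat_dvd_not_less prime_imp_coprime_nat coprime_iff_gcd_eq_1)
    ultimately show False
      using funpow_gcd_fixed[where f = f and m = m and n = p] assms by simp
  qed
  then show ?thesis
    using assms prime_ge_1_nat unfolding Per_def by blast
qed

lemma mat_ord_props:
  assumes "has_finite_order A"
  shows "0 < mat_ord A" "mat_pow A (mat_ord A) = mat 1"
    and "\<And>m. 0 < m \<Longrightarrow> m < mat_ord A \<Longrightarrow> mat_pow A m \<noteq> mat 1"
proof -
  have "\<exists>k. 0 < k \<and> mat_pow A k = mat 1"
    using assms by (simp add: has_finite_order_def)
  from LeastI_ex[OF this] not_less_Least[of _ "\<lambda>k. 0 < k \<and> mat_pow A k = mat 1"]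
  show "0 < mat_ord A" "mat_pow A (mat_ord A) = mat 1"
    and "\<And>m. 0 < m \<Longrightarrow> m < mat_ord A \<Longrightarrow> mat_pow A m \<noteq> mat 1"
    by (auto simp: mat_ord_def)
qed

lemma int_digits_eq_0:
  fixes r s n N :: int
  assumes "\<bar>r\<bar> < N" "\<bar>s\<bar> < N" "r * N + s = n * N\<^sup>2"
  shows "r = 0 \<and> s = 0"
proof -
  have small: "x = 0" if "N dvd x" "\<bar>x\<bar> < N" for x
    using that dvd_imp_le_int[of x N] by fastforce
  have "s = N * (n * N - r)"
    using assms(3) by (simp add: power2_eq_square algebra_simps)
  then have "s = 0"
    using small[of s] assms(2) by simp
  then have "r = N * n"
    using assms by (simp add: power2_eq_square algebra_simps)
  then have "r = 0"
    using small[of r] assms(1) by simp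
  with \<open>s = 0\<close> show ?thesis
    by simp
qed

lemma mat_act_test_point_in_lattice:
  fixes D :: "int^2^2" and N :: int
  assumes "\<And>i j. \<bar>D$i$j\<bar> < N"
    and "mat_act D (1 / of_int N, 1 / of_int N ^ 2) = of_int_pair c"
  shows "D = 0"
proof -
  have "N \<noteq> 0"
    using assms(1)[of 1 1] by linarith
  have digits: "D$i$1 * N + D$i$2 = n * N\<^sup>2" if "of_int (D$i$1) / of_int N + of_int (D$i$2) / of_int N ^ 2 = (of_int n :: real)" for i n
  proof -
    have "(of_int (D$i$1 * N + D$i$2) :: real) = of_int (n * N\<^sup>2)"
      using that \<open>N \<noteq> 0\<close> by (simp add: field_simps power2_eq_square)
    then show ?thesis
      by (simp only: of_int_eq_iff)
  qed
  have "D$1$1 * N + D$1$2 = fst c * N\<^sup>2" "D$2$1 * N + D$2$2 = snd c * N\<^sup>2"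
    using assms(2) by (auto intro!: digits simp: mat_act_def of_int_pair_def)
  then show ?thesis
    using int_digits_eq_0 assms(1) by (simp add: vec_eq_iff forall_2) blast
qed

lemma mat_ord_in_Per:
  assumes "has_finite_order A"
  shows "mat_ord A \<in> Per torus (toral_map A)"
proof -
  define k where "k = mat_ord A"
  note ord = mat_ord_props[OF assms, folded k_def]
  define M where "M = Max ((\<lambda>(m, i, j). \<bar>(mat_pow A m - mat 1)$i$j\<bar>) ` ({..<k} \<times> UNIV \<times> UNIV))"
  define N where "N = M + 1"
  have bound: "\<bar>(mat_pow A m - mat 1)$i$j\<bar> < N" if "m < k" for m i j
  proof -
    have "\<bar>(mat_pow A m - mat 1)$i$j\<bar> \<le> M"
      unfolding M_def by (rule Max_ge) (use that in \<open>auto intro!: image_eqI[where x = "(m, i, j)"]\<close>)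
    then show ?thesis
      by (simp add: N_def)
  qed
  define x0 :: "real \<times> real" where "x0 = (1 / of_int N, 1 / of_int N ^ 2)"
  have "(toral_map A ^^ m) (cover x0) \<noteq> cover x0" if "0 < m" "m < k" for m
  proof
    assume "(toral_map A ^^ m) (cover x0) = cover x0"
    then obtain c where "mat_act (mat_pow A m) x0 = x0 + of_int_pair c"
      by (auto simp: funpow_toral_map_cover cover_eq_iff)
    then have "mat_act (mat_pow A m - mat 1) x0 = of_int_pair c"
      by (simp add: mat_act_matrix_diff)
    then have "mat_pow A m - mat 1 = 0"
      using bound[OF \<open>m < k\<close>] by (intro mat_act_test_point_in_lattice) (auto simp: x0_def)
    then show False
      using ord(3) that by simp
  qed
  moreover have "(toral_map A ^^ k) (cover x0) = cover x0"
    by (simp add: funpow_toral_map_cover ord)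
  ultimately show ?thesis
    using ord(1) unfolding Per_def k_def by force
qed

lemma integer_valued_constant:
  fixes f :: "'a::topological_space \<Rightarrow> real"
  assumes "connected S" "continuous_on S f" "\<And>x. x \<in> S \<Longrightarrow> f x \<in> \<int>"
    and "x \<in> S" "y \<in> S"
  shows "f x = f y"
proof -
  have "f constant_on S"
  proof (rule continuous_discrete_range_constant[OF assms(1,2)])
    fix x assume "x \<in> S"
    have "1 \<le> norm (f y - f x)" if "y \<in> S" "f y \<noteq> f x" for y
      using that assms(3) \<open>x \<in> S\<close> Ints_nonzero_abs_ge1[of "f y - f x"] by simp
    then show "\<exists>e>0. \<forall>y. y \<in> S \<and> f y \<noteq> f x \<longrightarrow> e \<le> norm (f y - f x)"
      by (intro exI[of _ 1]) auto
  qed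
  then show ?thesis
    using assms(4,5) by (auto simp: constant_on_def)
qed

lemma lattice_valued_constant:
  fixes f :: "'a::topological_space \<Rightarrow> real \<times> real"
  assumes "connected S" "continuous_on S f" "\<And>x. x \<in> S \<Longrightarrow> f x \<in> range of_int_pair"
    and "x \<in> S" "y \<in> S"
  shows "f x = f y"
proof -
  have "fst (f x) = fst (f y)" "snd (f x) = snd (f y)"
    using assms(3) by (force simp: of_int_pair_def
        intro!: integer_valued_constant[OF assms(1) _ _ assms(4,5)] continuous_intros assms(2))+
  then show ?thesis
    by (simp add: prod_eq_iff)
qed

lemma contractible_map_to_torus_lifts:
  fixes f :: "'a::real_normed_vector \<Rightarrow> complex \<times> complex"
  assumes "contractible S" "continuous_on S f" "f ` S \<subseteq> torus"
  obtains K where "continuous_on S K" "\<And>z. z \<in> S \<Longrightarrow> f z = cover (K z)"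
proof -
  have nonzero: "fst (f z) \<noteq> 0" "snd (f z) \<noteq> 0" if "z \<in> S" for z
    using assms(3) that by (auto simp: torus_def)
  obtain L1 where L1: "continuous_on S L1" "\<And>z. z \<in> S \<Longrightarrow> fst (f z) = exp (L1 z)"
    using continuous_logarithm_on_contractible[OF _ assms(1), of "\<lambda>z. fst (f z)"] nonzero
    by (metis assms(2) continuous_on_fst)
  obtain L2 where L2: "continuous_on S L2" "\<And>z. z \<in> S \<Longrightarrow> snd (f z) = exp (L2 z)"
    using continuous_logarithm_on_contractible[OF _ assms(1), of "\<lambda>z. snd (f z)"] nonzero
    by (metis assms(2) continuous_on_snd)
  define K where "K z = (Im (L1 z) / (2 * pi), Im (L2 z) / (2 * pi))" for z
  show ?thesis
  proof
    show "continuous_on S K"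
      unfolding K_def by (intro continuous_intros L1(1) L2(1)) auto
    fix z assume "z \<in> S"
    have "Re (L1 z) = 0" "Re (L2 z) = 0"
      using assms(3) \<open>z \<in> S\<close> L1(2) L2(2) by (force simp: torus_def)+
    then show "f z = cover (K z)"
      using L1(2) L2(2) \<open>z \<in> S\<close> by (simp add: cover_def K_def prod_eq_iff exp_eq_polar)
  qed
qed

lemma diff_in_lattice_iff_cover_eq: "x - y \<in> range of_int_pair \<longleftrightarrow> cover x = cover y"
  by (auto simp: cover_eq_iff algebra_simps)

lemma continuous_on_mat_act: "continuous_on S (mat_act A :: real \<times> real \<Rightarrow> real \<times> real)"
  unfolding mat_act_def by (intro continuous_intros)

lemma homotopic_toral_map_lifts:
  assumes "homotopic_with_canon (\<lambda>_. True) torus torus (toral_map A) g"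
  obtains G where "continuous_on UNIV G" "\<And>x. g (cover x) = cover (G x)"
    and "\<And>x m. G (x + of_int_pair m) = G x + of_int_pair (mat_act A m)"
proof -
  obtain h where h: "continuous_on ({0..1::real} \<times> torus) h" "h \<in> {0..1::real} \<times> torus \<rightarrow> torus"
    "\<forall>x\<in>torus. h (0, x) = toral_map A x" "\<forall>x\<in>torus. h (1, x) = g x"
    using assms by (auto simp: homotopic_with)
  define S :: "(real \<times> real \<times> real) set" where "S = {0..1} \<times> UNIV"
  have "connected S" "contractible S"
    by (simp_all add: S_def convex_imp_contractible convex_Times contractible_imp_connected)
  have "continuous_on S (\<lambda>z. h (fst z, cover (snd z)))"
    by (rule continuous_on_compose2[OF h(1)])
      (auto simp: S_def intro!: continuous_intros continuous_on_compose2[OF continuous_on_cover])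
  moreover have "(\<lambda>z. h (fst z, cover (snd z))) ` S \<subseteq> torus"
    using h(2) by (auto simp: S_def)
  ultimately obtain K where K: "continuous_on S K" "\<And>z. z \<in> S \<Longrightarrow> h (fst z, cover (snd z)) = cover (K z)"
    using contractible_map_to_torus_lifts[OF \<open>contractible S\<close>] by blast
  have K_cover: "h (t, cover x) = cover (K (t, x))" if "t \<in> {0..1}" for t x
    using K(2)[of "(t, x)"] that by (simp add: S_def)
  have K_slice: "continuous_on UNIV (\<lambda>x. K (t, x))" if "t \<in> {0..1}" for t
    by (rule continuous_on_compose2[OF K(1)]) (use that in \<open>auto simp: S_def intro!: continuous_intros\<close>)
  obtain c where c: "\<And>x. K (0, x) - mat_act A x = c"
  proof
    fix x
    show "K (0, x) - mat_act A x = K (0, 0) - mat_act A 0"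
      using K_cover[of 0] h(3) by (intro lattice_valued_constant[of UNIV])
        (auto simp: toral_map_cover diff_in_lattice_iff_cover_eq
          intro!: continuous_intros K_slice continuous_on_mat_act)
  qed
  have "K (1, x + of_int_pair m) - K (1, x) = K (0, x + of_int_pair m) - K (0, x)" for x m
  proof -
    define D where "D z = K (fst z, snd z + of_int_pair m) - K z" for z
    have "D (1, x) = D (0, x)"
    proof (rule lattice_valued_constant[OF \<open>connected S\<close>])
      show "continuous_on S D"
        unfolding D_def by (intro continuous_intros K(1) continuous_on_compose2[OF K(1)]) (auto simp: S_def)
      show "D z \<in> range of_int_pair" if "z \<in> S" for z
        using that K_cover[of "fst z" "snd z"] K_cover[of "fst z" "snd z + of_int_pair m"]
        by (simp add: D_def S_def diff_in_lattice_iff_cover_eq mem_Times_iff)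
    qed (auto simp: S_def)
    then show ?thesis
      by (simp add: D_def)
  qed
  also have "K (0, x + of_int_pair m) - K (0, x) = of_int_pair (mat_act A m)" for x m
    using c[of x] c[of "x + of_int_pair m"]
    by (simp add: mat_act_add mat_act_of_int_pair algebra_simps eq_diff_eq)
  finally show ?thesis
    using K_cover[of 1] K_slice[of 1] h(4) by (intro that[of "\<lambda>x. K (1, x)"]) (auto simp: algebra_simps)
qed

lemma funpow_lift:
  assumes "\<And>x. g (cover x) = cover (G x)"
  shows "(g ^^ n) (cover x) = cover ((G ^^ n) x)"
  by (induction n) (simp_all add: assms)

lemma funpow_equivariant:
  assumes "\<And>x m. G (x + of_int_pair m) = G x + of_int_pair (mat_act A m)"
  shows "(G ^^ n) (x + of_int_pair m) = (G ^^ n) x + of_int_pair (mat_act (mat_pow A n) m)"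
  by (induction n) (simp_all add: assms mat_pow_Suc mat_act_mult)

lemma funpow_equivariant_translate:
  assumes "\<And>x m. G (x + of_int_pair m) = G x + of_int_pair (mat_act A m)"
    and "G x = x + of_int_pair u"
  shows "(G ^^ n) x = x + of_int_pair (mat_act (\<Sum>i<n. mat_pow A i) u)"
proof (induction n)
  case 0
  then show ?case
    by (simp add: mat_act_def of_int_pair_def zero_prod_def)
next
  case (Suc n)
  have "(G ^^ Suc n) x = (G ^^ n) (x + of_int_pair u)"
    by (simp add: funpow_Suc_right assms(2) del: funpow.simps)
  also have "\<dots> = x + of_int_pair (mat_act (\<Sum>i<Suc n. mat_pow A i) u)"
    by (simp add: funpow_equivariant[OF assms(1)] Suc.IH mat_act_matrix_add of_int_pair_add algebra_simps)
  finally show ?case .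
qed

lemma continuous_on_funpow:
  fixes f :: "'a::topological_space \<Rightarrow> 'a"
  assumes "continuous_on UNIV f"
  shows "continuous_on UNIV (f ^^ n)"
proof (induction n)
  case (Suc n)
  then show ?case
    using continuous_on_compose2[OF assms Suc.IH] by (simp add: o_def)
qed (simp add: continuous_on_id')

lemma equivariant_deviation_bounded:
  assumes "continuous_on UNIV F" "\<And>x m. F (x + of_int_pair m) = F x + of_int_pair (mat_act B m)"
  obtains C where "\<And>x. norm (F x - mat_act B x) \<le> C"
proof -
  define \<phi> where "\<phi> x = F x - mat_act B x" for x
  have periodic: "\<phi> (x + of_int_pair m) = \<phi> x" for x m
    by (simp add: \<phi>_def assms(2) mat_act_add mat_act_of_int_pair)
  have "compact (\<phi> ` ({0..1} \<times> {0..1}))"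
    unfolding \<phi>_def
    by (intro compact_continuous_image compact_Times continuous_intros continuous_on_mat_act
        continuous_on_subset[OF assms(1)]) auto
  then obtain C where C: "\<And>y. y \<in> {0..1} \<times> {0..1} \<Longrightarrow> norm (\<phi> y) \<le> C"
    by (meson bounded_iff compact_imp_bounded imageI)
  show ?thesis
  proof
    fix x :: "real \<times> real"
    define m where "m = (\<lfloor>fst x\<rfloor>, \<lfloor>snd x\<rfloor>)"
    have "x - of_int_pair m \<in> {0..1} \<times> {0..1}"
      using floor_correct[of "fst x"] floor_correct[of "snd x"]
      by (simp add: m_def of_int_pair_def mem_Times_iff) linarith
    then show "norm (F x - mat_act B x) \<le> C"
      using C periodic[of "x - of_int_pair m" m] by (simp add: \<phi>_def)
  qed
qed

lemma bounded_perturbation_of_linear_has_translated_point: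
  fixes f L :: "'a::euclidean_space \<Rightarrow> 'a"
  assumes "continuous_on UNIV f" "linear L" "inj (\<lambda>x. L x - x)" "\<And>x. norm (f x - L x) \<le> C"
  shows "\<exists>x. f x = x + v"
proof -
  have lin: "linear (\<lambda>x. L x - x)"
    using assms(2) by (simp add: linear_compose_sub linear_id[unfolded id_def])
  then obtain T where T: "linear T" "\<And>y. L (T y) - T y = y"
    using linear_surjective_right_inverse[OF lin linear_injective_imp_surjective[OF lin assms(3)]]
    by (auto simp: fun_eq_iff)
  obtain K where K: "K > 0" "\<And>y. norm (T y) \<le> norm y * K"
    using bounded_linear.pos_bounded[of T] T(1) linear_conv_bounded_linear by blast
  define \<Phi> where "\<Phi> x = T (v - (f x - L x))" for x
  define R where "R = (norm v + C) * K + 1"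
  have "norm (\<Phi> x) \<le> (norm v + C) * K" for x
    unfolding \<Phi>_def
    by (rule order_trans[OF K(2)], intro mult_right_mono order_trans[OF norm_triangle_ineq4])
      (use K assms(4) in auto)
  then have "norm (\<Phi> x) \<le> R" for x
    by (smt (verit) R_def)
  then have "\<Phi> \<in> cball 0 R \<rightarrow> cball 0 R"
    by auto
  moreover have "continuous_on (cball 0 R) \<Phi>"
    unfolding \<Phi>_def
    by (intro continuous_on_compose2[OF linear_continuous_on[OF T(1)[unfolded linear_conv_bounded_linear]]]
        continuous_intros continuous_on_subset[OF assms(1)] linear_continuous_on
        assms(2)[unfolded linear_conv_bounded_linear]) auto
  moreover have "0 < R"
    using K assms(4)[of 0] by (simp add: R_def add_nonneg_pos order_trans[OF norm_ge_zero])
  ultimately obtain x where "\<Phi> x = x"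
    using brouwer_ball by blast
  then have "L x - x = v - (f x - L x)"
    using T(2) unfolding \<Phi>_def by metis
  then show ?thesis
    by (auto simp: algebra_simps)
qed

lemma linear_mat_act: "linear (mat_act B :: real \<times> real \<Rightarrow> real \<times> real)"
  by (simp add: linear_iff mat_act_def prod_eq_iff algebra_simps)

lemma inj_mat_act:
  assumes "det B \<noteq> 0"
  shows "inj (mat_act B :: real \<times> real \<Rightarrow> real \<times> real)"
  unfolding linear_injective_0[OF linear_mat_act]
proof (intro allI impI)
  fix x :: "real \<times> real"
  assume "mat_act B x = 0"
  then have "of_int (B$1$1) * fst x + of_int (B$1$2) * snd x = 0"
    "of_int (B$2$1) * fst x + of_int (B$2$2) * snd x = 0"
    by (simp_all add: mat_act_def prod_eq_iff)
  then have "of_int (det B) * fst x = 0" "of_int (det B) * snd x = 0"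
    unfolding det_2 of_int_diff of_int_mult by algebra+
  then show "x = 0"
    using assms by (simp add: prod_eq_iff)
qed

lemma lift_has_translated_point:
  assumes "continuous_on UNIV G" "\<And>x m. G (x + of_int_pair m) = G x + of_int_pair (mat_act A m)"
    and "det (mat_pow A n - mat 1) \<noteq> 0"
  shows "\<exists>x. (G ^^ n) x = x + v"
proof -
  obtain C where "\<And>x. norm ((G ^^ n) x - mat_act (mat_pow A n) x) \<le> C"
    using equivariant_deviation_bounded[where F = "G ^^ n" and B = "mat_pow A n"]
      continuous_on_funpow[OF assms(1)] funpow_equivariant[OF assms(2)] by blast
  moreover have "inj (\<lambda>x :: real \<times> real. mat_act (mat_pow A n) x - x)"
    using inj_mat_act[OF assms(3)] unfolding inj_def by (simp add: mat_act_matrix_diff)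
  ultimately show ?thesis
    by (intro bounded_perturbation_of_linear_has_translated_point[OF continuous_on_funpow[OF assms(1)] linear_mat_act])
qed

lemma continuous_on_toral_map: "continuous_on torus (toral_map A)"
proof -
  have "toral_map A = (\<lambda>y. (fst y powi A$1$1 * snd y powi A$1$2, fst y powi A$2$1 * snd y powi A$2$2))"
    by (auto simp: toral_map_def)
  moreover have "continuous_on torus \<dots>"
    by (intro continuous_intros) (auto simp: torus_def)
  ultimately show ?thesis
    by simp
qed

lemma toral_map_torus: "toral_map A ` torus \<subseteq> torus"
  by (auto simp: torus_eq_range_cover toral_map_cover)

lemma MPer_subset_Per: "MPer A \<subseteq> Per torus (toral_map A)"
proof -
  have "homotopic_with_canon (\<lambda>_. True) torus torus (toral_map A) (toral_map A)"
    using continuous_on_toral_map toral_map_torus by (auto simp: continuous_map_subtopology_eu)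
  then show ?thesis
    unfolding MPer_def by blast
qed

lemma in_MPerI:
  assumes "\<And>g. homotopic_with_canon (\<lambda>_. True) torus torus (toral_map A) g \<Longrightarrow> n \<in> Per torus g"
  shows "n \<in> MPer A"
  using assms unfolding MPer_def by blast

lemma one_in_MPer:
  assumes "det (A - mat 1) \<noteq> 0"
  shows "1 \<in> MPer A"
proof (rule in_MPerI)
  fix g
  assume "homotopic_with_canon (\<lambda>_. True) torus torus (toral_map A) g"
  then obtain G where G: "continuous_on UNIV G" "\<And>x. g (cover x) = cover (G x)"
    "\<And>x m. G (x + of_int_pair m) = G x + of_int_pair (mat_act A m)"
    using homotopic_toral_map_lifts by blast
  have "\<exists>x. G x = x"
    using lift_has_translated_point[OF G(1,3), where n = 1 and v = 0] assms by (simp add: mat_pow_Suc)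
  then obtain x where "G x = x" ..
  then have "g (cover x) = cover x"
    by (simp add: G(2))
  then show "1 \<in> Per torus g"
    unfolding Per_def by (auto intro!: bexI[of _ "cover x"])
qed

lemma mat_act_not_surj:
  fixes M :: "int^2^2"
  assumes "2 \<le> \<bar>det M\<bar>"
  shows "\<exists>v :: int \<times> int. \<forall>u. mat_act M u \<noteq> v"
proof (rule ccontr)
  assume "\<not> ?thesis"
  then have surj: "\<exists>u. mat_act M u = v" for v :: "int \<times> int"
    by blast
  obtain p r :: "int \<times> int" where "mat_act M p = (1, 0)" "mat_act M r = (0, 1)"
    using surj[of "(1, 0)"] surj[of "(0, 1)"] by blast
  then have "det M * (fst p * snd r - snd p * fst r) = 1"
    unfolding det_2 mat_act_def by (simp add: prod_eq_iff) algebra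
  then have "\<bar>det M\<bar> = 1"
    by (metis dvd_triv_left zdvd1_eq)
  with assms show False
    by simp
qed

lemma prime_in_MPer:
  assumes "prime p" "det (mat_pow A p - mat 1) \<noteq> 0" "2 \<le> \<bar>det (\<Sum>i<p. mat_pow A i)\<bar>"
  shows "p \<in> MPer A"
proof (rule in_MPerI)
  fix g
  assume "homotopic_with_canon (\<lambda>_. True) torus torus (toral_map A) g"
  then obtain G where G: "continuous_on UNIV G" "\<And>x. g (cover x) = cover (G x)"
    "\<And>x m. G (x + of_int_pair m) = G x + of_int_pair (mat_act A m)"
    using homotopic_toral_map_lifts by blast
  obtain v :: "int \<times> int" where v: "\<And>u. mat_act (\<Sum>i<p. mat_pow A i) u \<noteq> v"
    using mat_act_not_surj[OF assms(3)] by blast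
  obtain x where x: "(G ^^ p) x = x + of_int_pair v"
    using lift_has_translated_point[OF G(1,3) assms(2)] by blast
  \<comment> \<open>A fixed point of \<open>g\<close> over \<open>x\<close> would force \<open>v\<close> into the image of \<open>I + A + \<dots> + A\<^sup>p\<^sup>-\<^sup>1\<close>.\<close>
  have "g (cover x) \<noteq> cover x"
  proof
    assume "g (cover x) = cover x"
    then obtain u where "G x = x + of_int_pair u"
      by (auto simp: G(2) cover_eq_iff)
    then have "(G ^^ p) x = x + of_int_pair (mat_act (\<Sum>i<p. mat_pow A i) u)"
      by (rule funpow_equivariant_translate[OF G(3)])
    with x have "v = mat_act (\<Sum>i<p. mat_pow A i) u"
      by simp
    with v show False
      by blast
  qed
  moreover have "(g ^^ p) (cover x) = cover x"
    by (simp add: funpow_lift[where g = g and G = G, OF G(2)] x)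
  ultimately show "p \<in> Per torus g"
    using prime_in_Per[OF cover_in_torus assms(1)] by blast
qed

lemma det_minus_id_2: "det (A - mat 1) = det A - trace A + 1" for A :: "'a::comm_ring_1^2^2"
  by (simp add: det_2 trace_2 mat_def algebra_simps)

lemma det_mat_pow: "det (mat_pow A n) = det A ^ n"
  by (induction n) (simp_all add: mat_pow_Suc det_mul)

lemma abs_det_eq_1_if_finite_order:
  assumes "has_finite_order A"
  shows "\<bar>det A\<bar> = 1"
proof -
  obtain k where "0 < k" "mat_pow A k = mat 1"
    using assms by (auto simp: has_finite_order_def)
  then have "det A dvd 1"
    by (metis det_I det_mat_pow dvd_power)
  then show ?thesis
    by (simp add: zdvd1_eq)
qed

lemma real_eigenvalue_if_discriminant_nonneg:
  fixes A :: "int^2^2"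
  assumes "4 * det A \<le> (trace A)\<^sup>2"
  shows "\<exists>r::real. is_complex_eigenvalue A (of_real r)"
proof -
  define a b c e where "a = A$1$1" "b = A$1$2" "c = A$2$1" "e = A$2$2"
  have action: "map_matrix of_int A *v v = (\<chi> i. if i = 1 then of_int a * v$1 + of_int b * v$2
      else of_int c * v$1 + of_int e * v$2)" for v :: "complex^2"
    by (simp add: vec_eq_iff forall_2 matrix_vector_mult_def sum_2 a_b_c_e_def)
  show ?thesis
  proof (cases "b = 0")
    case True
    define v :: "complex^2" where "v = (\<chi> i. if i = 1 then 0 else 1)"
    have "v \<noteq> 0" "map_matrix of_int A *v v = of_real (of_int e) *s v"
      by (simp_all add: action v_def vec_eq_iff forall_2 True)
    then show ?thesis
      unfolding is_complex_eigenvalue_def by blast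
  next
    case False
    define t D where "t = real_of_int (a + e)" "D = real_of_int (a * e - b * c)"
    have "0 \<le> t\<^sup>2 - 4 * D"
      using assms unfolding t_D_def a_b_c_e_def det_2 trace_2
      by (metis (mono_tags) diff_ge_0_iff_ge of_int_le_iff of_int_mult of_int_numeral of_int_power)
    \<comment> \<open>\<open>\<mu>\<close> is a root of the characteristic polynomial and \<open>(b, \<mu> - a)\<close> an eigenvector.\<close>
    define \<mu> where "\<mu> = (t + sqrt (t\<^sup>2 - 4 * D)) / 2"
    have "\<mu>\<^sup>2 = t * \<mu> - D"
      using \<open>0 \<le> t\<^sup>2 - 4 * D\<close> unfolding \<mu>_def by (simp add: power2_eq_square field_simps)
    then have "of_int c * of_int b + of_int e * (\<mu> - of_int a) = \<mu> * (\<mu> - of_int a)"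
      unfolding t_D_def by (simp add: power2_eq_square algebra_simps)
    then have eigen: "of_real (of_int c * of_int b + of_int e * (\<mu> - of_int a))
        = complex_of_real (\<mu> * (\<mu> - of_int a))"
      by simp
    define v :: "complex^2" where "v = (\<chi> i. if i = 1 then of_int b else of_real \<mu> - of_int a)"
    have "map_matrix of_int A *v v = of_real \<mu> *s v"
      using eigen unfolding v_def by (simp add: action vec_eq_iff forall_2 algebra_simps)
    moreover have "v \<noteq> 0"
      using False by (simp add: v_def vec_eq_iff forall_2)
    ultimately show ?thesis
      unfolding is_complex_eigenvalue_def by blast
  qed
qed

lemma elliptic_det_trace:
  assumes "has_finite_order A" "\<forall>\<mu>. is_complex_eigenvalue A \<mu> \<longrightarrow> \<mu> \<notin> \<real>"
  shows "det A = 1" "trace A \<in> {-1, 0, 1}"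
proof -
  have "(trace A)\<^sup>2 < 4 * det A"
    using real_eigenvalue_if_discriminant_nonneg[of A] assms(2) by force
  moreover have "\<bar>det A\<bar> = 1"
    by (rule abs_det_eq_1_if_finite_order[OF assms(1)])
  moreover have "0 \<le> (trace A)\<^sup>2"
    by simp
  ultimately show "det A = 1"
    by (auto simp: abs_if split: if_splits)
  with \<open>(trace A)\<^sup>2 < 4 * det A\<close> have "\<not> 2 \<le> \<bar>trace A\<bar>"
    using abs_le_square_iff[of 2 "trace A"] by simp
  then show "trace A \<in> {-1, 0, 1}"
    by auto
qed

lemma trace_neg_1_mat_pow:
  assumes "det A = 1" "trace A = -1"
  shows "mat_pow A 3 = mat 1"
  using assms unfolding det_2 trace_2
  by (simp add: mat_pow_def eval_nat_numeral matrix_matrix_mult_def sum_2 mat_def vec_eq_iff forall_2)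
    (intro conjI; algebra)

lemma trace_0_mat_pow:
  assumes "det A = 1" "trace A = 0"
  shows "mat_pow A 4 = mat 1" "det (mat_pow A 2 - mat 1) = 4" "det (\<Sum>i<2. mat_pow A i) = 2"
  using assms unfolding det_2 trace_2
  by (simp_all add: mat_pow_def eval_nat_numeral matrix_matrix_mult_def sum_2 mat_def vec_eq_iff forall_2;
      (intro conjI)?; algebra)+

lemma trace_1_mat_pow:
  assumes "det A = 1" "trace A = 1"
  shows "mat_pow A 6 = mat 1" "det (mat_pow A 2 - mat 1) = 3" "det (\<Sum>i<2. mat_pow A i) = 3"
    and "det (mat_pow A 3 - mat 1) = 4" "det (\<Sum>i<3. mat_pow A i) = 4"
  using assms unfolding det_2 trace_2
  by (simp_all add: mat_pow_def eval_nat_numeral matrix_matrix_mult_def sum_2 mat_def vec_eq_iff forall_2;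
      (intro conjI)?; algebra)+

lemma mat_ord_dvd:
  assumes "has_finite_order A" "mat_pow A k = mat 1"
  shows "mat_ord A dvd k"
  using least_period_dvd[where f = "(**) A" and x = "mat 1"] mat_ord_props[OF assms(1)] assms(2)
  unfolding mat_pow_def by blast

lemma Per_subset_if_proper_divisors_in_MPer:
  assumes "has_finite_order A" "0 < k" "mat_pow A k = mat 1"
    and "\<And>d. d dvd k \<Longrightarrow> d < k \<Longrightarrow> d \<in> MPer A"
  shows "Per torus (toral_map A) \<subseteq> MPer A \<union> {mat_ord A}"
proof
  fix n
  assume "n \<in> Per torus (toral_map A)"
  then obtain y where y: "y \<in> torus" "(toral_map A ^^ n) y = y" "1 \<le> n"
    "\<forall>m. 0 < m \<and> m < n \<longrightarrow> (toral_map A ^^ m) y \<noteq> y"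
    unfolding Per_def by blast
  have "(toral_map A ^^ mat_ord A) y = y"
    using y(1) mat_ord_props(2)[OF assms(1)] by (auto simp: torus_eq_range_cover funpow_toral_map_cover)
  then have "n dvd mat_ord A"
    using least_period_dvd[OF y(2) _ y(4)] y(3) by simp
  moreover have "mat_ord A dvd k"
    by (rule mat_ord_dvd[OF assms(1,3)])
  ultimately have "n \<le> mat_ord A" "mat_ord A \<le> k" "n dvd k"
    using mat_ord_props(1)[OF assms(1)] assms(2) by (auto intro: dvd_imp_le dvd_trans)
  then show "n \<in> MPer A \<union> {mat_ord A}"
    using assms(4)[of n] by (cases "n < k") auto
qed

lemma elliptic_Per_subset:
  assumes "has_finite_order A" "det A = 1" "trace A \<in> {-1, 0, 1}"
  shows "Per torus (toral_map A) \<subseteq> MPer A \<union> {mat_ord A}"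
proof -
  have one: "1 \<in> MPer A"
    using assms(2,3) by (intro one_in_MPer) (auto simp: det_minus_id_2)
  from assms(3) consider "trace A = -1" | "trace A = 0" | "trace A = 1"
    by blast
  then show ?thesis
  proof cases
    case 1
    have "d = 1" if "d dvd 3" "d < 3" for d :: nat
      using that lessThan_iff[of d 3] by (auto simp: lessThan_nat_numeral lessThan_Suc simp del: lessThan_iff)
    then show ?thesis
      using one trace_neg_1_mat_pow[OF assms(2) 1]
      by (intro Per_subset_if_proper_divisors_in_MPer[OF assms(1)]) auto
  next
    case 2
    note facts = trace_0_mat_pow[OF assms(2) 2]
    have "2 \<in> MPer A"
      using facts by (intro prime_in_MPer) auto
    moreover have "d = 1 \<or> d = 2" if "d dvd 4" "d < 4" for d :: nat
      using that lessThan_iff[of d 4] by (auto simp: lessThan_nat_numeral lessThan_Suc simp del: lessThan_iff)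
    ultimately show ?thesis
      using one facts by (intro Per_subset_if_proper_divisors_in_MPer[OF assms(1)]) auto
  next
    case 3
    note facts = trace_1_mat_pow[OF assms(2) 3]
    have "2 \<in> MPer A" "3 \<in> MPer A"
      using facts by (intro prime_in_MPer; simp)+
    moreover have "d = 1 \<or> d = 2 \<or> d = 3" if "d dvd 6" "d < 6" for d :: nat
      using that lessThan_iff[of d 6] by (auto simp: lessThan_nat_numeral lessThan_Suc simp del: lessThan_iff)
    ultimately show ?thesis
      using one facts by (intro Per_subset_if_proper_divisors_in_MPer[OF assms(1)]) auto
  qed
qed

theorem mainTheorem1:
  fixes A :: "int^2^2"
  assumes "has_finite_order A"
  shows "mat_ord A \<in> Per torus (toral_map A)
    \<and> ((\<forall>\<mu>. is_complex_eigenvalue A \<mu> \<longrightarrow> \<mu> \<notin> \<real> \<and> (\<exists>n>0. \<mu> ^ n = 1))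
        \<longrightarrow> Per torus (toral_map A) = MPer A \<union> {mat_ord A})"
proof (intro conjI impI)
  show ord: "mat_ord A \<in> Per torus (toral_map A)"
    by (rule mat_ord_in_Per[OF assms])
  assume "\<forall>\<mu>. is_complex_eigenvalue A \<mu> \<longrightarrow> \<mu> \<notin> \<real> \<and> (\<exists>n>0. \<mu> ^ n = 1)"
  then have "\<forall>\<mu>. is_complex_eigenvalue A \<mu> \<longrightarrow> \<mu> \<notin> \<real>"
    by blast
  then have "Per torus (toral_map A) \<subseteq> MPer A \<union> {mat_ord A}"
    using elliptic_det_trace[OF assms] elliptic_Per_subset[OF assms] by blast
  with ord MPer_subset_Per show "Per torus (toral_map A) = MPer A \<union> {mat_ord A}"
    by blast
qed

end
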